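(* In the Bayesian online learning setting for $n$-round dynamic inference described in the context, for any online-learned estimation strategy and any round $i$, the parameter $W$ is conditionally independent of the current observation $X_i$ and the estimates $\hat Y^i$ up to round $i$, given the past observations $Z^{i-1}=((X_1,Y_1),\ldots,(X_{i-1},Y_{i-1}))$.
   Context: Setting (Bayesian online learning for $n$-round dynamic inference). $\mathsf X,\mathsf Y,\hat{\mathsf Y},\mathsf W$ are measurable spaces. The following are given: a distribution $P_{X_1}$ on $\mathsf X$; probability transition kernels $K_i(\cdot\mid x,\hat y)$ from $\mathsf X\times\hat{\mathsf Y}$ to $\mathsf X$ for $i=2,\ldots,n$; a parametrized family of kernels $\{P_{Y|X,w}:w\in\mathsf W\}$ from $\mathsf X$ to $\mathsf Y$; and a prior $P_W$ on $\mathsf W$. Write $Z_i=(X_i,Y_i)$. An online-learned estimation strategy is a tuple $(\psi_1,\ldots,\psi_n)$ of maps $\psi_i:(\mathsf X\times\mathsf Y)^{i-1}\times\hat{\mathsf Y}^{i-1}\times\mathsf X\to\hat{\mathsf Y}$. It determines the joint law of $(W,X^n,Y^n,\hat Y^n)$ as follows. $W\sim P_W$. $X_1\sim P_{X_1}$ is independent of $W$. For each $i$: given all previously generated variables, $Y_i\sim P_{Y|X,W}(\cdot\mid X_i,W)$; $\hat Y_i=\psi_i(Z^{i-1},\hat Y^{i-1},X_i)$; and, given all variables generated up to round $i$, $X_{i+1}\sim K_{i+1}(\cdot\mid X_i,\hat Y_i)$. *)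

theory Defs
  imports "HOL-Probability.Probability"
begin

definition cond_prob :: "'a measure \<Rightarrow> 'a measure \<Rightarrow> 'a set \<Rightarrow> 'a \<Rightarrow> real" where
  "cond_prob M F A = real_cond_exp M F (indicator A)"

definition cond_indep :: "'a measure \<Rightarrow> 'a measure \<Rightarrow> 'a measure \<Rightarrow> 'a measure \<Rightarrow> bool" where
  "cond_indep M F G H \<longleftrightarrow>
     (\<forall>A\<in>sets G. \<forall>B\<in>sets H. AE \<omega> in M.
        cond_prob M F (A \<inter> B) \<omega> = cond_prob M F A \<omega> * cond_prob M F B \<omega>)"

definition gen :: "'a measure \<Rightarrow> ('a \<Rightarrow> 'b) \<Rightarrow> 'b measure \<Rightarrow> 'a measure" where
  "gen M f N = vimage_algebra (space M) f N"

end

theory Submission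
  imports Defs
begin

(* Let F be the sigma-algebra of the past Z^(i-1). Every estimate Yh_m is a measurable function of
   X^m and Y^(m-1), so (X_i, Yh^i) is measurable for F \<squnion> sigma(X_i), and it suffices to show
   P(W \<in> A | F \<squnion> sigma(X_i)) = P(W \<in> A | F). A Dynkin argument on the generator C \<inter> {X_i \<in> B}
   reduces this to the existence of an F-measurable version of P(X_i \<in> B | F \<squnion> sigma(W)).
   In round 1, F is trivial and X_1 is independent of W. In round i > 1, the conditional law of X_i
   given the whole history of round i - 1, which contains W, is K_i(X_(i-1), Yh_(i-1)): a function
   of the past alone. *)

lemma space_gen [simp]: "space (gen M f N) = space M"
  unfolding gen_def by simp

lemma sets_gen_subset:
  assumes f: "f \<in> measurable L N" and sp: "space L = space M"
  shows "sets (gen M f N) \<subseteq> sets L"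
proof -
  have fs: "f \<in> space M \<rightarrow> space N" using measurable_space[OF f] sp by auto
  show ?thesis
    unfolding gen_def sets_vimage_algebra2[OF fs] using measurable_sets[OF f] sp by auto
qed

lemma subalgebra_gen: "f \<in> measurable M N \<Longrightarrow> subalgebra M (gen M f N)"
  using sets_gen_subset[of f M N M] by (simp add: subalgebra_def)

lemma measurable_gen:
  assumes f: "f \<in> measurable M N" and g: "g \<in> measurable N P"
    and h: "\<And>\<omega>. \<omega> \<in> space M \<Longrightarrow> h \<omega> = g (f \<omega>)"
  shows "h \<in> measurable (gen M f N) P"
proof -
  have "f \<in> space M \<rightarrow> space N" using measurable_space[OF f] by auto
  then have "(\<lambda>\<omega>. g (f \<omega>)) \<in> measurable (gen M f N) P"
    unfolding gen_def by (rule measurable_compose[OF measurable_vimage_algebra1 g])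
  then show ?thesis by (rule measurable_cong[THEN iffD1, rotated]) (simp add: h)
qed

lemma sets_gen_const:
  assumes f: "\<And>\<omega>. \<omega> \<in> space M \<Longrightarrow> f \<omega> = c" and c: "c \<in> space N"
  shows "sets (gen M f N) \<subseteq> {{}, space M}"
proof
  fix C assume "C \<in> sets (gen M f N)"
  moreover have fs: "f \<in> space M \<rightarrow> space N" using f c by simp
  ultimately obtain A where "C = f -` A \<inter> space M"
    unfolding gen_def sets_vimage_algebra2[OF fs] by blast
  then show "C \<in> {{}, space M}" using f by (cases "c \<in> A") auto
qed

lemma cond_indep_subset:
  "cond_indep M F G H' \<Longrightarrow> sets H \<subseteq> sets H' \<Longrightarrow> cond_indep M F G H"
  unfolding cond_indep_def by blast

definition adjoin_generator :: "'a measure \<Rightarrow> 'a measure \<Rightarrow> ('a \<Rightarrow> 'b) \<Rightarrow> 'b measure \<Rightarrow> 'a set set" where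
  "adjoin_generator M F X N = {C \<inter> {\<omega>\<in>space M. X \<omega> \<in> B} | C B. C \<in> sets F \<and> B \<in> sets N}"

definition adjoin :: "'a measure \<Rightarrow> 'a measure \<Rightarrow> ('a \<Rightarrow> 'b) \<Rightarrow> 'b measure \<Rightarrow> 'a measure" where
  "adjoin M F X N = sigma (space M) (adjoin_generator M F X N)"

lemma Int_stable_adjoin_generator: "Int_stable (adjoin_generator M F X N)"
proof (rule Int_stableI)
  fix D D' assume "D \<in> adjoin_generator M F X N" "D' \<in> adjoin_generator M F X N"
  then obtain C B C' B' where "D = C \<inter> {\<omega>\<in>space M. X \<omega> \<in> B}" "D' = C' \<inter> {\<omega>\<in>space M. X \<omega> \<in> B'}"
    and "C \<in> sets F" "C' \<in> sets F" "B \<in> sets N" "B' \<in> sets N"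
    unfolding adjoin_generator_def by blast
  then have "D \<inter> D' = (C \<inter> C') \<inter> {\<omega>\<in>space M. X \<omega> \<in> B \<inter> B'}" "C \<inter> C' \<in> sets F" "B \<inter> B' \<in> sets N"
    by auto
  then show "D \<inter> D' \<in> adjoin_generator M F X N" unfolding adjoin_generator_def by blast
qed

context
  fixes M F :: "'a measure" and X :: "'a \<Rightarrow> 'b" and N :: "'b measure"
  assumes F: "subalgebra M F" and X: "X \<in> measurable M N"
begin

lemma adjoin_generator_subset: "adjoin_generator M F X N \<subseteq> sets M"
  using F X by (auto simp: adjoin_generator_def subalgebra_def)

lemma space_adjoin [simp]: "space (adjoin M F X N) = space M"
  using adjoin_generator_subset sets.sets_into_space unfolding adjoin_def by (intro space_measure_of) blast

lemma sets_adjoin: "sets (adjoin M F X N) = sigma_sets (space M) (adjoin_generator M F X N)"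
  using adjoin_generator_subset sets.sets_into_space unfolding adjoin_def by (intro sets_measure_of) blast

lemma subalgebra_adjoin: "subalgebra M (adjoin M F X N)"
  unfolding subalgebra_def sets_adjoin using sets.sigma_sets_subset[OF adjoin_generator_subset] by simp

lemma subalgebra_adjoin_base: "subalgebra (adjoin M F X N) F"
  unfolding subalgebra_def
proof (intro conjI subsetI)
  show "space F = space (adjoin M F X N)" using F by (simp add: subalgebra_def)
  fix C assume C: "C \<in> sets F"
  then have "C = C \<inter> {\<omega>\<in>space M. X \<omega> \<in> space N}"
    using F measurable_space[OF X] sets.sets_into_space by (fastforce simp: subalgebra_def)
  with C show "C \<in> sets (adjoin M F X N)"
    unfolding sets_adjoin adjoin_generator_def by blast
qed

lemma measurable_adjoin: "X \<in> measurable (adjoin M F X N) N"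
proof (rule measurableI)
  show "X \<omega> \<in> space N" if "\<omega> \<in> space (adjoin M F X N)" for \<omega>
    using that measurable_space[OF X] by simp
  fix B assume "B \<in> sets N"
  moreover have "space M \<in> sets F" using F sets.top[of F] by (simp add: subalgebra_def)
  moreover have "X -` B \<inter> space (adjoin M F X N) = space M \<inter> {\<omega>\<in>space M. X \<omega> \<in> B}" by auto
  ultimately show "X -` B \<inter> space (adjoin M F X N) \<in> sets (adjoin M F X N)"
    unfolding sets_adjoin adjoin_generator_def by blast
qed

end

lemma set_integrable_of_integrable:
  fixes f :: "'a \<Rightarrow> 'b::{banach, second_countable_topology}"
  shows "integrable M f \<Longrightarrow> D \<in> sets M \<Longrightarrow> set_integrable M D f"
  unfolding set_integrable_def using integrable_mult_indicator by blast

lemma set_integral_eq_on_sigma_sets: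
  fixes f g :: "'a \<Rightarrow> 'b::{banach, second_countable_topology}"
  assumes f: "integrable M f" and g: "integrable M g"
    and E: "Int_stable E" "E \<subseteq> sets M"
    and eq: "\<And>D. D \<in> E \<Longrightarrow> (LINT x:D|M. f x) = (LINT x:D|M. g x)"
    and total: "(LINT x|M. f x) = (LINT x|M. g x)"
    and D: "D \<in> sigma_sets (space M) E"
  shows "(LINT x:D|M. f x) = (LINT x:D|M. g x)"
proof -
  have sets: "sigma_sets (space M) E \<subseteq> sets M"
    using E(2) by (rule sets.sigma_sets_subset)
  have pow: "E \<subseteq> Pow (space M)" using E(2) sets.sets_into_space by blast
  from E(1) pow D show ?thesis
  proof (induction rule: sigma_sets_induct_disjoint)
    case (basic D)
    then show ?case by (rule eq)
  next
    case (compl D)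
    have split: "(LINT x|M. h x) = (LINT x:D|M. h x) + (LINT x:space M - D|M. h x)"
      if "integrable M h" for h :: "'a \<Rightarrow> 'b"
    proof -
      have "D \<in> sets M" using compl(1) sets by blast
      then have "(LINT x:D \<union> (space M - D)|M. h x) = (LINT x:D|M. h x) + (LINT x:space M - D|M. h x)"
        using that by (intro set_integral_Un set_integrable_of_integrable) auto
      moreover have "D \<union> (space M - D) = space M" using \<open>D \<in> sets M\<close> sets.sets_into_space by blast
      ultimately show ?thesis using set_integral_space[OF that] by simp
    qed
    show ?case using split[OF f] split[OF g] total compl(2) by simp
  next
    case (union D)
    have D: "\<And>i. D i \<in> sets M" using union(2) sets by blast
    have disj: "\<And>i j. i \<noteq> j \<Longrightarrow> D i \<inter> D j = {}" using union(1) by (auto simp: disjoint_family_on_def)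
    have "(\<Union>i. D i) \<in> sets M" using D by blast
    then show ?case
      using lebesgue_integral_countable_add[OF D disj set_integrable_of_integrable[OF f]]
        lebesgue_integral_countable_add[OF D disj set_integrable_of_integrable[OF g]] union(3)
      by simp
  qed (simp add: set_lebesgue_integral_def)
qed

lemma subalgebra_trans: "subalgebra M L \<Longrightarrow> subalgebra L F \<Longrightarrow> subalgebra M F"
  by (auto simp: subalgebra_def)

context prob_space
begin

lemma integrable_indicator_event: "A \<in> events \<Longrightarrow> integrable M (indicator A :: 'a \<Rightarrow> real)"
  by (simp add: emeasure_eq_measure)

lemma real_cond_exp_finer_eqI:
  fixes f :: "'a \<Rightarrow> real"
  assumes L: "subalgebra M L" and FL: "subalgebra L F"
    and LE: "sets L = sigma_sets (space M) E" and E: "Int_stable E"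
    and f: "integrable M f"
    and eq: "\<And>D. D \<in> E \<Longrightarrow> (LINT x:D|M. f x) = (LINT x:D|M. real_cond_exp M F f x)"
  shows "AE x in M. real_cond_exp M L f x = real_cond_exp M F f x"
proof -
  interpret F: finite_measure_subalgebra M F by unfold_locales (rule subalgebra_trans[OF L FL])
  interpret L: finite_measure_subalgebra M L by unfold_locales (rule L)
  have "E \<subseteq> sets M" using LE L by (auto simp: subalgebra_def)
  have meas: "real_cond_exp M F f \<in> borel_measurable L" by (rule measurable_from_subalg[OF FL]) simp
  show ?thesis
  proof (rule L.real_cond_exp_charact[OF _ f F.real_cond_exp_int(1)[OF f] meas])
    fix D assume "D \<in> sets L"
    then show "(LINT x:D|M. f x) = (LINT x:D|M. real_cond_exp M F f x)"
      unfolding LE using F.real_cond_exp_int[OF f] \<open>E \<subseteq> sets M\<close>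
      by (intro set_integral_eq_on_sigma_sets[OF f _ E _ eq]) simp_all
  qed
qed

lemma cond_prob_Int_eq_mult:
  assumes L: "subalgebra M L" and FL: "subalgebra L F"
    and A: "A \<in> events"
    and eq: "AE x in M. real_cond_exp M L (indicator A) x = real_cond_exp M F (indicator A) x"
    and B: "B \<in> sets L"
  shows "AE x in M. cond_prob M F (A \<inter> B) x = cond_prob M F A x * cond_prob M F B x"
proof -
  interpret F: finite_measure_subalgebra M F by unfold_locales (rule subalgebra_trans[OF L FL])
  interpret L: finite_measure_subalgebra M L by unfold_locales (rule L)
  define g where "g = real_cond_exp M F (indicator A)"
  have B_ev: "B \<in> events" using B L by (auto simp: subalgebra_def)
  have AB: "indicator (A \<inter> B) = (\<lambda>x. indicator B x * indicator A x :: real)"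
    by (auto split: split_indicator)
  have int_AB: "integrable M (\<lambda>x. indicator B x * indicator A x :: real)"
    using integrable_mult_indicator[OF B_ev integrable_indicator_event[OF A]] by simp
  have tower: "AE x in M. real_cond_exp M F (real_cond_exp M L (\<lambda>x. indicator B x * indicator A x)) x
      = real_cond_exp M F (\<lambda>x. indicator B x * indicator A x) x"
    by (rule F.real_cond_exp_nested_subalg[OF L FL int_AB])
  have "AE x in M. real_cond_exp M L (\<lambda>x. indicator B x * indicator A x) x = indicator B x * real_cond_exp M L (indicator A) x"
    using B A int_AB by (intro L.real_cond_exp_mult) simp_all
  then have "AE x in M. real_cond_exp M L (\<lambda>x. indicator B x * indicator A x) x = g x * indicator B x"
    using eq unfolding g_def by eventually_elim simp
  then have pull_L: "AE x in M. real_cond_exp M F (real_cond_exp M L (\<lambda>x. indicator B x * indicator A x)) x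
      = real_cond_exp M F (\<lambda>x. g x * indicator B x) x"
    using B_ev by (intro F.real_cond_exp_cong) (simp_all add: g_def)
  have pull_F: "AE x in M. real_cond_exp M F (\<lambda>x. g x * indicator B x) x = g x * real_cond_exp M F (indicator B) x"
    using B_ev F.real_cond_exp_int(1)[OF integrable_indicator_event[OF A]]
    by (intro F.real_cond_exp_mult) (simp_all add: g_def integrable_real_mult_indicator)
  show ?thesis
    using tower pull_L pull_F unfolding cond_prob_def AB g_def by eventually_elim simp
qed

end

(* k is an F-measurable version of P(S | F \<squnion> G); the join is only probed on its
   intersection-stable generator C \<inter> A. *)
definition cond_prob_join_measurable :: "'a measure \<Rightarrow> 'a measure \<Rightarrow> 'a measure \<Rightarrow> 'a set \<Rightarrow> bool" where
  "cond_prob_join_measurable M F G S \<longleftrightarrow>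
     (\<exists>k. k \<in> borel_measurable F \<and> integrable M k \<and>
        (\<forall>A\<in>sets G. \<forall>C\<in>sets F. measure M (C \<inter> A \<inter> S) = (LINT \<omega>:C \<inter> A|M. k \<omega>)))"

context prob_space
begin

lemma set_integral_cond_exp_Int:
  assumes F: "subalgebra M F" and G: "subalgebra M G"
    and S: "S \<in> events" and A: "A \<in> sets G" and C: "C \<in> sets F"
    and join: "cond_prob_join_measurable M F G S"
  shows "(LINT x:C \<inter> S|M. indicator A x) = (LINT x:C \<inter> S|M. real_cond_exp M F (indicator A) x)"
proof -
  interpret F: finite_measure_subalgebra M F by unfold_locales (rule F)
  obtain k where kF: "k \<in> borel_measurable F" and int_k: "integrable M k"
    and k: "\<And>A C. A \<in> sets G \<Longrightarrow> C \<in> sets F \<Longrightarrow> measure M (C \<inter> A \<inter> S) = (LINT \<omega>:C \<inter> A|M. k \<omega>)"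
    using join unfolding cond_prob_join_measurable_def by blast
  define g where "g = real_cond_exp M F (indicator A)"
  have A_ev: "A \<in> events" and C_ev: "C \<in> events" using A C F G by (auto simp: subalgebra_def)
  have int_g: "integrable M g" unfolding g_def by (rule F.real_cond_exp_int(1)[OF integrable_indicator_event[OF A_ev]])
  have kM: "k \<in> borel_measurable M" using F kF by (rule measurable_from_subalg)
  have space_G: "space M \<in> sets G" using G sets.top[of G] by (simp add: subalgebra_def)
  have k_cond_exp: "AE x in M. real_cond_exp M F (indicator S) x = k x"
  proof (rule F.real_cond_exp_charact[OF _ integrable_indicator_event[OF S] int_k kF])
    fix C' assume C': "C' \<in> sets F"
    have "C' \<subseteq> space M" using C' F sets.sets_into_space by (auto simp: subalgebra_def)
    then have "C' \<inter> space M = C'" "C' \<inter> S \<inter> space M = C' \<inter> S" by auto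
    then show "(LINT x:C'|M. indicator S x) = (LINT x:C'|M. k x)"
      using k[OF space_G C'] by (simp add: set_lebesgue_integral_def flip: indicator_inter_arith)
  qed
  have "(LINT x:C \<inter> S|M. indicator A x) = (\<integral>x. indicator (C \<inter> A \<inter> S) x \<partial>M)"
    unfolding set_lebesgue_integral_def by (intro Bochner_Integration.integral_cong) (auto split: split_indicator)
  also have "\<dots> = (LINT x:C \<inter> A|M. k x)"
    using k[OF A C] C_ev A_ev S by (simp add: Int_absorb2)
  also have "\<dots> = (\<integral>x. (indicator C x * k x) * indicator A x \<partial>M)"
    unfolding set_lebesgue_integral_def by (intro Bochner_Integration.integral_cong) (auto split: split_indicator)
  also have "\<dots> = (\<integral>x. (indicator C x * k x) * g x \<partial>M)"
    unfolding g_def using C kF A_ev integrable_mult_indicator[OF C_ev integrable_real_mult_indicator[OF A_ev int_k]]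
    by (intro F.real_cond_exp_intg(2)[symmetric]) (simp_all add: mult.assoc)
  also have "\<dots> = (\<integral>x. (indicator C x * g x) * real_cond_exp M F (indicator S) x \<partial>M)"
    using k_cond_exp kM C_ev by (intro integral_cong_AE) (auto simp: g_def)
  also have "\<dots> = (\<integral>x. (indicator C x * g x) * indicator S x \<partial>M)"
    using C S integrable_real_mult_indicator[OF S integrable_mult_indicator[OF C_ev int_g]]
    by (intro F.real_cond_exp_intg(2)) (simp_all add: g_def)
  also have "\<dots> = (LINT x:C \<inter> S|M. g x)"
    unfolding set_lebesgue_integral_def by (intro Bochner_Integration.integral_cong) (auto split: split_indicator)
  finally show ?thesis unfolding g_def .
qed

lemma cond_indep_adjoin:
  assumes F: "subalgebra M F" and G: "subalgebra M G" and X: "X \<in> measurable M N"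
    and join: "\<And>B. B \<in> sets N \<Longrightarrow> cond_prob_join_measurable M F G {\<omega>\<in>space M. X \<omega> \<in> B}"
  shows "cond_indep M F G (adjoin M F X N)"
  unfolding cond_indep_def
proof (intro ballI)
  fix A D assume A: "A \<in> sets G" and D: "D \<in> sets (adjoin M F X N)"
  have A_ev: "A \<in> events" using A G by (auto simp: subalgebra_def)
  have "AE x in M. real_cond_exp M (adjoin M F X N) (indicator A) x = real_cond_exp M F (indicator A) x"
  proof (rule real_cond_exp_finer_eqI[OF subalgebra_adjoin[OF F X] subalgebra_adjoin_base[OF F X]
        sets_adjoin[OF F X] Int_stable_adjoin_generator integrable_indicator_event[OF A_ev]])
    fix E assume "E \<in> adjoin_generator M F X N"
    then obtain C B where "E = C \<inter> {\<omega>\<in>space M. X \<omega> \<in> B}" "C \<in> sets F" "B \<in> sets N"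
      unfolding adjoin_generator_def by blast
    moreover have "{\<omega>\<in>space M. X \<omega> \<in> B} \<in> events" if "B \<in> sets N" for B
      using X that by measurable
    ultimately show "(LINT x:E|M. indicator A x) = (LINT x:E|M. real_cond_exp M F (indicator A) x)"
      using set_integral_cond_exp_Int[OF F G _ A _ join] by blast
  qed
  then show "AE x in M. cond_prob M F (A \<inter> D) x = cond_prob M F A x * cond_prob M F D x"
    by (rule cond_prob_Int_eq_mult[OF subalgebra_adjoin[OF F X] subalgebra_adjoin_base[OF F X] A_ev _ D])
qed

lemma cond_prob_join_measurableI:
  assumes H: "subalgebra M H" and FH: "sets F \<subseteq> sets H" and GH: "sets G \<subseteq> sets H"
    and S: "S \<in> events"
    and kF: "k \<in> borel_measurable F" and kM: "k \<in> borel_measurable M" and int_k: "integrable M k"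
    and k: "AE x in M. cond_prob M H S x = k x"
  shows "cond_prob_join_measurable M F G S"
  unfolding cond_prob_join_measurable_def
proof (intro exI[of _ k] conjI ballI kF int_k)
  interpret H: finite_measure_subalgebra M H by unfold_locales (rule H)
  fix A C assume "A \<in> sets G" "C \<in> sets F"
  then have D: "C \<inter> A \<in> sets H" using FH GH by auto
  then have D_ev: "C \<inter> A \<in> events" using H by (auto simp: subalgebra_def)
  have "measure M (C \<inter> A \<inter> S) = (\<integral>x. indicator (C \<inter> A) x * indicator S x \<partial>M)"
    using D_ev S by (simp add: Int_absorb2 flip: indicator_inter_arith)
  also have "\<dots> = (\<integral>x. indicator (C \<inter> A) x * cond_prob M H S x \<partial>M)"
    unfolding cond_prob_def using D S integrable_mult_indicator[OF D_ev integrable_indicator_event[OF S]]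
    by (intro H.real_cond_exp_intg(2)[symmetric]) simp_all
  also have "\<dots> = (LINT x:C \<inter> A|M. k x)"
    unfolding set_lebesgue_integral_def using k kM D_ev
    by (intro integral_cong_AE) (auto simp: cond_prob_def)
  finally show "measure M (C \<inter> A \<inter> S) = (LINT x:C \<inter> A|M. k x)" .
qed

end

locale online_learning = prob_space M
  for M :: "'a measure" +
  fixes MX :: "'x measure" and MY :: "'y measure" and MYh :: "'yh measure" and MW :: "'w measure"
    and n :: nat
    and K :: "nat \<Rightarrow> 'x \<Rightarrow> 'yh \<Rightarrow> 'x measure"
    and \<psi> :: "nat \<Rightarrow> (nat \<Rightarrow> 'x \<times> 'y) \<Rightarrow> (nat \<Rightarrow> 'yh) \<Rightarrow> 'x \<Rightarrow> 'yh"
    and W :: "'a \<Rightarrow> 'w" and X :: "nat \<Rightarrow> 'a \<Rightarrow> 'x" and Y :: "nat \<Rightarrow> 'a \<Rightarrow> 'y"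
    and Yh :: "nat \<Rightarrow> 'a \<Rightarrow> 'yh"
  assumes W_rv: "W \<in> measurable M MW"
    and X_rv: "\<And>i. i \<in> {1..n} \<Longrightarrow> X i \<in> measurable M MX"
    and Y_rv: "\<And>i. i \<in> {1..n} \<Longrightarrow> Y i \<in> measurable M MY"
    and \<psi>_meas: "\<And>i. i \<in> {1..n} \<Longrightarrow>
       (\<lambda>(z, yh, x). \<psi> i z yh x)
         \<in> measurable (PiM {1..<i} (\<lambda>_. MX \<Otimes>\<^sub>M MY) \<Otimes>\<^sub>M PiM {1..<i} (\<lambda>_. MYh) \<Otimes>\<^sub>M MX) MYh"
    and Yh_def: "\<And>i \<omega>. i \<in> {1..n} \<Longrightarrow> \<omega> \<in> space M \<Longrightarrow>
       Yh i \<omega> = \<psi> i (restrict (\<lambda>j. (X j \<omega>, Y j \<omega>)) {1..<i}) (restrict (\<lambda>j. Yh j \<omega>) {1..<i}) (X i \<omega>)"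
    and K_kernel: "\<And>i. i \<in> {2..n} \<Longrightarrow> (\<lambda>(x, yh). K i x yh) \<in> measurable (MX \<Otimes>\<^sub>M MYh) (prob_algebra MX)"
    and X_law: "\<And>i B. i \<in> {1..<n} \<Longrightarrow> B \<in> sets MX \<Longrightarrow>
       AE \<omega> in M.
         cond_prob M
           (gen M (\<lambda>\<omega>. (W \<omega>, restrict (\<lambda>j. X j \<omega>) {1..i}, restrict (\<lambda>j. Y j \<omega>) {1..i},
                         restrict (\<lambda>j. Yh j \<omega>) {1..i}))
              (MW \<Otimes>\<^sub>M PiM {1..i} (\<lambda>_. MX) \<Otimes>\<^sub>M PiM {1..i} (\<lambda>_. MY) \<Otimes>\<^sub>M PiM {1..i} (\<lambda>_. MYh)))
           {\<omega>\<in>space M. X (Suc i) \<omega> \<in> B} \<omega>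
         = measure (K (Suc i) (X i \<omega>) (Yh i \<omega>)) B"
    and W_X1_indep: "distr M (MW \<Otimes>\<^sub>M MX) (\<lambda>\<omega>. (W \<omega>, X 1 \<omega>)) = distr M MW W \<Otimes>\<^sub>M distr M MX (X 1)"
begin

lemma measurable_Yh:
  assumes L: "space L = space M" and p: "p \<le> n"
    and X: "\<And>l. l \<in> {1..p} \<Longrightarrow> X l \<in> measurable L MX"
    and Y: "\<And>l. l \<in> {1..<p} \<Longrightarrow> Y l \<in> measurable L MY"
  shows "m \<in> {1..p} \<Longrightarrow> Yh m \<in> measurable L MYh"
proof (induction m rule: less_induct)
  case (less m)
  have m: "m \<in> {1..n}" using less.prems p by auto
  have "(\<lambda>\<omega>. (restrict (\<lambda>j. (X j \<omega>, Y j \<omega>)) {1..<m}, restrict (\<lambda>j. Yh j \<omega>) {1..<m}, X m \<omega>))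
     \<in> measurable L (PiM {1..<m} (\<lambda>_. MX \<Otimes>\<^sub>M MY) \<Otimes>\<^sub>M PiM {1..<m} (\<lambda>_. MYh) \<Otimes>\<^sub>M MX)"
    by (intro measurable_Pair measurable_restrict) (use X Y less in auto)
  from measurable_compose[OF this \<psi>_meas[OF m]]
  have "(\<lambda>\<omega>. \<psi> m (restrict (\<lambda>j. (X j \<omega>, Y j \<omega>)) {1..<m}) (restrict (\<lambda>j. Yh j \<omega>) {1..<m}) (X m \<omega>))
      \<in> measurable L MYh" by simp
  then show ?case by (rule measurable_cong[THEN iffD1, rotated]) (simp add: Yh_def[OF m] L)
qed

lemma Yh_rv: "m \<in> {1..n} \<Longrightarrow> Yh m \<in> measurable M MYh"
  using X_rv Y_rv by (intro measurable_Yh[OF refl order.refl]) auto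

definition past :: "nat \<Rightarrow> 'a measure" where
  "past i = gen M (\<lambda>\<omega>. restrict (\<lambda>j. (X j \<omega>, Y j \<omega>)) {1..<i}) (PiM {1..<i} (\<lambda>_. MX \<Otimes>\<^sub>M MY))"

context
  fixes i assumes i: "i \<in> {1..n}"
begin

lemma past_rv: "(\<lambda>\<omega>. restrict (\<lambda>j. (X j \<omega>, Y j \<omega>)) {1..<i}) \<in> measurable M (PiM {1..<i} (\<lambda>_. MX \<Otimes>\<^sub>M MY))"
  using i X_rv Y_rv by (intro measurable_restrict measurable_Pair) auto

lemma subalgebra_past: "subalgebra M (past i)"
  unfolding past_def by (rule subalgebra_gen[OF past_rv])

lemma X_past: "l \<in> {1..<i} \<Longrightarrow> X l \<in> measurable (past i) MX"
  unfolding past_def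
  by (rule measurable_gen[OF past_rv, where g="\<lambda>z. fst (z l)"]) auto

lemma Y_past: "l \<in> {1..<i} \<Longrightarrow> Y l \<in> measurable (past i) MY"
  unfolding past_def
  by (rule measurable_gen[OF past_rv, where g="\<lambda>z. snd (z l)"]) auto

lemma Yh_past: "l \<in> {1..<i} \<Longrightarrow> Yh l \<in> measurable (past i) MYh"
  using i X_past Y_past by (intro measurable_Yh[where p="i - 1"]) (auto simp: past_def)

lemma sets_current_subset_adjoin:
  "sets (gen M (\<lambda>\<omega>. (X i \<omega>, restrict (\<lambda>j. Yh j \<omega>) {1..i})) (MX \<Otimes>\<^sub>M PiM {1..i} (\<lambda>_. MYh)))
     \<subseteq> sets (adjoin M (past i) (X i) MX)"
proof (rule sets_gen_subset)
  let ?L = "adjoin M (past i) (X i) MX"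
  have L: "subalgebra ?L (past i)" using subalgebra_adjoin_base[OF subalgebra_past X_rv] i .
  have X: "X l \<in> measurable ?L MX" if "l \<in> {1..i}" for l
  proof (cases "l = i")
    case True
    then show ?thesis using measurable_adjoin[OF subalgebra_past X_rv] i by simp
  next
    case False
    then show ?thesis using that measurable_from_subalg[OF L X_past] by simp
  qed
  have Y: "Y l \<in> measurable ?L MY" if "l \<in> {1..<i}" for l
    using that measurable_from_subalg[OF L Y_past] by simp
  show "space ?L = space M" using space_adjoin[OF subalgebra_past X_rv] i by simp
  with i X Y show "(\<lambda>\<omega>. (X i \<omega>, restrict (\<lambda>j. Yh j \<omega>) {1..i})) \<in> measurable ?L (MX \<Otimes>\<^sub>M PiM {1..i} (\<lambda>_. MYh))"
    by (intro measurable_Pair measurable_restrict measurable_Yh[of ?L i]) auto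
qed

end

lemma prob_W_X1_factorizes:
  assumes n: "1 \<le> n" and A: "A \<in> sets MW" and B: "B \<in> sets MX"
  shows "prob ({\<omega>\<in>space M. W \<omega> \<in> A} \<inter> {\<omega>\<in>space M. X 1 \<omega> \<in> B})
    = prob {\<omega>\<in>space M. W \<omega> \<in> A} * prob {\<omega>\<in>space M. X 1 \<omega> \<in> B}"
proof -
  have X1: "X 1 \<in> measurable M MX" using n X_rv by simp
  interpret PX: prob_space "distr M MX (X 1)" using X1 by (rule prob_space_distr)
  have "{\<omega>\<in>space M. W \<omega> \<in> A} \<inter> {\<omega>\<in>space M. X 1 \<omega> \<in> B} = (\<lambda>\<omega>. (W \<omega>, X 1 \<omega>)) -` (A \<times> B) \<inter> space M"
    by auto
  then have "prob ({\<omega>\<in>space M. W \<omega> \<in> A} \<inter> {\<omega>\<in>space M. X 1 \<omega> \<in> B})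
      = measure (distr M (MW \<Otimes>\<^sub>M MX) (\<lambda>\<omega>. (W \<omega>, X 1 \<omega>))) (A \<times> B)"
    using measure_distr[OF measurable_Pair[OF W_rv X1], of "A \<times> B"] A B by simp
  also have "\<dots> = measure (distr M MW W \<Otimes>\<^sub>M distr M MX (X 1)) (A \<times> B)"
    unfolding W_X1_indep ..
  also have "\<dots> = measure (distr M MW W) A * measure (distr M MX (X 1)) B"
    using PX.emeasure_pair_measure_Times[of A "distr M MW W" B] A B by (simp add: measure_def enn2real_mult)
  finally show ?thesis
    using A B W_rv X1 by (simp add: measure_distr vimage_def Int_def conj_commute)
qed

lemma sets_past_1: "sets (past 1) \<subseteq> {{}, space M}"
  unfolding past_def by (rule sets_gen_const[where c="\<lambda>_. undefined"]) (simp_all add: space_PiM restrict_def)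

lemma cond_prob_join_measurable_first:
  assumes n: "1 \<le> n" and B: "B \<in> sets MX"
  shows "cond_prob_join_measurable M (past 1) (gen M W MW) {\<omega>\<in>space M. X 1 \<omega> \<in> B}"
  unfolding cond_prob_join_measurable_def
proof (intro exI[of _ "\<lambda>_. prob {\<omega>\<in>space M. X 1 \<omega> \<in> B}"] conjI ballI)
  define S where "S = {\<omega>\<in>space M. X 1 \<omega> \<in> B}"
  fix A C assume A: "A \<in> sets (gen M W MW)" and C: "C \<in> sets (past 1)"
  have Ws: "W \<in> space M \<rightarrow> space MW" using measurable_space[OF W_rv] by auto
  with A obtain A' where A': "A' \<in> sets MW" and "A = W -` A' \<inter> space M"
    unfolding gen_def sets_vimage_algebra2[OF Ws] by blast
  then have A_eq: "A = {\<omega>\<in>space M. W \<omega> \<in> A'}" by auto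
  have A_ev: "A \<in> events" using A sets_gen_subset[OF W_rv] by auto
  from C sets_past_1 have "C = {} \<or> C = space M" by blast
  then show "measure M (C \<inter> A \<inter> S) = (LINT \<omega>:C \<inter> A|M. prob S)"
  proof
    assume "C = space M"
    then have "C \<inter> A = A" using A_ev sets.sets_into_space by blast
    moreover have "prob (A \<inter> S) = prob A * prob S"
      unfolding A_eq S_def by (rule prob_W_X1_factorizes[OF n A' B])
    ultimately show ?thesis by (simp add: set_integral_const[OF A_ev] emeasure_eq_measure)
  qed (simp add: set_lebesgue_integral_def)
qed simp_all

lemma cond_prob_join_measurable_later:
  assumes i: "i \<in> {2..n}" and B: "B \<in> sets MX"
  shows "cond_prob_join_measurable M (past i) (gen M W MW) {\<omega>\<in>space M. X i \<omega> \<in> B}"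
proof -
  define j where "j = i - 1"
  have i_eq: "i = Suc j" and j: "j \<in> {1..<n}" and i': "i \<in> {1..n}" using i by (auto simp: j_def)
  define V where "V = (\<lambda>\<omega>. (W \<omega>, restrict (\<lambda>l. X l \<omega>) {1..j}, restrict (\<lambda>l. Y l \<omega>) {1..j},
    restrict (\<lambda>l. Yh l \<omega>) {1..j}))"
  define NV where "NV = MW \<Otimes>\<^sub>M PiM {1..j} (\<lambda>_. MX) \<Otimes>\<^sub>M PiM {1..j} (\<lambda>_. MY) \<Otimes>\<^sub>M PiM {1..j} (\<lambda>_. MYh)"
  have V: "V \<in> measurable M NV"
    unfolding V_def NV_def using j W_rv X_rv Y_rv Yh_rv by (intro measurable_Pair measurable_restrict) auto
  define k where "k = (\<lambda>\<omega>. measure (K i (X j \<omega>) (Yh j \<omega>)) B)"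
  have K: "(\<lambda>\<omega>. K i (X j \<omega>) (Yh j \<omega>)) \<in> measurable (past i) (prob_algebra MX)"
    using measurable_compose[OF measurable_Pair[OF X_past[OF i'] Yh_past[OF i']] K_kernel[OF i]] j i_eq
    by simp
  show ?thesis
  proof (rule cond_prob_join_measurableI)
    show "subalgebra M (gen M V NV)" using V by (rule subalgebra_gen)
    have "(\<lambda>v. restrict (\<lambda>l. (fst (snd v) l, fst (snd (snd v)) l)) {1..<i})
        \<in> measurable NV (PiM {1..<i} (\<lambda>_. MX \<Otimes>\<^sub>M MY))"
    proof (intro measurable_restrict measurable_Pair)
      fix l assume "l \<in> {1..<i}"
      then have [measurable]: "l \<in> {1..j}" using i_eq by auto
      show "(\<lambda>v. fst (snd v) l) \<in> measurable NV MX" "(\<lambda>v. fst (snd (snd v)) l) \<in> measurable NV MY"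
        unfolding NV_def by measurable
    qed
    then have "(\<lambda>\<omega>. restrict (\<lambda>j. (X j \<omega>, Y j \<omega>)) {1..<i}) \<in> measurable (gen M V NV) (PiM {1..<i} (\<lambda>_. MX \<Otimes>\<^sub>M MY))"
      by (rule measurable_gen[OF V]) (simp add: V_def i_eq fun_eq_iff)
    then show "sets (past i) \<subseteq> sets (gen M V NV)"
      unfolding past_def by (rule sets_gen_subset) simp
    show "sets (gen M W MW) \<subseteq> sets (gen M V NV)"
      by (rule sets_gen_subset[OF measurable_gen[OF V, where g=fst]]) (simp_all add: V_def NV_def)
    show "{\<omega>\<in>space M. X i \<omega> \<in> B} \<in> events" using X_rv[OF i'] B by measurable
    show kF: "k \<in> borel_measurable (past i)"
      unfolding k_def using measurable_compose[OF K measurable_measure_prob_algebra[OF B]] .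
    then show kM: "k \<in> borel_measurable M" by (rule measurable_from_subalg[OF subalgebra_past[OF i']])
    have "AE \<omega> in M. norm (k \<omega>) \<le> 1"
    proof (intro AE_I2)
      fix \<omega> assume "\<omega> \<in> space M"
      then have "prob_space (K i (X j \<omega>) (Yh j \<omega>))"
        using measurable_space[OF K] by (simp add: past_def space_prob_algebra)
      then show "norm (k \<omega>) \<le> 1" by (simp add: k_def prob_space.prob_le_1)
    qed
    then show "integrable M k" using kM by (rule integrable_const_bound)
    show "AE \<omega> in M. cond_prob M (gen M V NV) {\<omega>\<in>space M. X i \<omega> \<in> B} \<omega> = k \<omega>"
      using X_law[OF j B] unfolding V_def NV_def k_def i_eq .
  qed
qed

theorem cond_indep_W_current_given_past:
  assumes i: "i \<in> {1..n}"
  shows "cond_indep M (past i) (gen M W MW)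
           (gen M (\<lambda>\<omega>. (X i \<omega>, restrict (\<lambda>j. Yh j \<omega>) {1..i})) (MX \<Otimes>\<^sub>M PiM {1..i} (\<lambda>_. MYh)))"
proof (rule cond_indep_subset[OF _ sets_current_subset_adjoin[OF i]])
  show "cond_indep M (past i) (gen M W MW) (adjoin M (past i) (X i) MX)"
  proof (rule cond_indep_adjoin[OF subalgebra_past[OF i] subalgebra_gen[OF W_rv] X_rv[OF i]])
    fix B assume B: "B \<in> sets MX"
    show "cond_prob_join_measurable M (past i) (gen M W MW) {\<omega>\<in>space M. X i \<omega> \<in> B}"
    proof (cases "i = 1")
      case True
      then show ?thesis using cond_prob_join_measurable_first[OF _ B] i by simp
    next
      case False
      then have "i \<in> {2..n}" using i by simp
      then show ?thesis using B by (rule cond_prob_join_measurable_later)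
    qed
  qed
qed

end

theorem lemma6:
  fixes M :: "'a measure"
    and MX :: "'x measure" and MY :: "'y measure" and MYh :: "'yh measure" and MW :: "'w measure"
    and n :: nat
    and PX1 :: "'x measure" and PW :: "'w measure"
    and K :: "nat \<Rightarrow> 'x \<Rightarrow> 'yh \<Rightarrow> 'x measure"
    and PY :: "'w \<Rightarrow> 'x \<Rightarrow> 'y measure"
    and \<psi> :: "nat \<Rightarrow> (nat \<Rightarrow> 'x \<times> 'y) \<Rightarrow> (nat \<Rightarrow> 'yh) \<Rightarrow> 'x \<Rightarrow> 'yh"
    and W :: "'a \<Rightarrow> 'w" and X :: "nat \<Rightarrow> 'a \<Rightarrow> 'x" and Y :: "nat \<Rightarrow> 'a \<Rightarrow> 'y"
    and Yh :: "nat \<Rightarrow> 'a \<Rightarrow> 'yh"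
  assumes PX1: "prob_space PX1" "sets PX1 = sets MX"
    and PW: "prob_space PW" "sets PW = sets MW"
    and K_kernel: "\<And>i. i \<in> {2..n} \<Longrightarrow> (\<lambda>(x, yh). K i x yh) \<in> measurable (MX \<Otimes>\<^sub>M MYh) (prob_algebra MX)"
    and PY_kernel: "(\<lambda>(x, w). PY w x) \<in> measurable (MX \<Otimes>\<^sub>M MW) (prob_algebra MY)"
    and \<psi>_meas: "\<And>i. i \<in> {1..n} \<Longrightarrow>
       (\<lambda>(z, yh, x). \<psi> i z yh x)
         \<in> measurable (PiM {1..<i} (\<lambda>_. MX \<Otimes>\<^sub>M MY) \<Otimes>\<^sub>M PiM {1..<i} (\<lambda>_. MYh) \<Otimes>\<^sub>M MX) MYh"
    and M: "prob_space M"
    and W_rv: "W \<in> measurable M MW"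
    and X_rv: "\<And>i. i \<in> {1..n} \<Longrightarrow> X i \<in> measurable M MX"
    and Y_rv: "\<And>i. i \<in> {1..n} \<Longrightarrow> Y i \<in> measurable M MY"
    and Yh_rv: "\<And>i. i \<in> {1..n} \<Longrightarrow> Yh i \<in> measurable M MYh"
    and W_law: "distr M MW W = PW"
    and X1_law: "distr M MX (X 1) = PX1"
    and W_X1_indep: "distr M (MW \<Otimes>\<^sub>M MX) (\<lambda>\<omega>. (W \<omega>, X 1 \<omega>)) = PW \<Otimes>\<^sub>M PX1"
    and Y_law: "\<And>i B. i \<in> {1..n} \<Longrightarrow> B \<in> sets MY \<Longrightarrow>
       AE \<omega> in M.
         cond_prob M
           (gen M (\<lambda>\<omega>. (W \<omega>, restrict (\<lambda>j. X j \<omega>) {1..i}, restrict (\<lambda>j. Y j \<omega>) {1..<i},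
                         restrict (\<lambda>j. Yh j \<omega>) {1..<i}))
              (MW \<Otimes>\<^sub>M PiM {1..i} (\<lambda>_. MX) \<Otimes>\<^sub>M PiM {1..<i} (\<lambda>_. MY) \<Otimes>\<^sub>M PiM {1..<i} (\<lambda>_. MYh)))
           {\<omega>\<in>space M. Y i \<omega> \<in> B} \<omega>
         = measure (PY (W \<omega>) (X i \<omega>)) B"
    and Yh_def: "\<And>i \<omega>. i \<in> {1..n} \<Longrightarrow> \<omega> \<in> space M \<Longrightarrow>
       Yh i \<omega> = \<psi> i (restrict (\<lambda>j. (X j \<omega>, Y j \<omega>)) {1..<i}) (restrict (\<lambda>j. Yh j \<omega>) {1..<i}) (X i \<omega>)"
    and X_law: "\<And>i B. i \<in> {1..<n} \<Longrightarrow> B \<in> sets MX \<Longrightarrow>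
       AE \<omega> in M.
         cond_prob M
           (gen M (\<lambda>\<omega>. (W \<omega>, restrict (\<lambda>j. X j \<omega>) {1..i}, restrict (\<lambda>j. Y j \<omega>) {1..i},
                         restrict (\<lambda>j. Yh j \<omega>) {1..i}))
              (MW \<Otimes>\<^sub>M PiM {1..i} (\<lambda>_. MX) \<Otimes>\<^sub>M PiM {1..i} (\<lambda>_. MY) \<Otimes>\<^sub>M PiM {1..i} (\<lambda>_. MYh)))
           {\<omega>\<in>space M. X (Suc i) \<omega> \<in> B} \<omega>
         = measure (K (Suc i) (X i \<omega>) (Yh i \<omega>)) B"
    and i: "i \<in> {1..n}"
  shows "cond_indep M
           (gen M (\<lambda>\<omega>. restrict (\<lambda>j. (X j \<omega>, Y j \<omega>)) {1..<i}) (PiM {1..<i} (\<lambda>_. MX \<Otimes>\<^sub>M MY)))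
           (gen M W MW)
           (gen M (\<lambda>\<omega>. (X i \<omega>, restrict (\<lambda>j. Yh j \<omega>) {1..i})) (MX \<Otimes>\<^sub>M PiM {1..i} (\<lambda>_. MYh)))"
proof -
  have W_X1_indep': "distr M (MW \<Otimes>\<^sub>M MX) (\<lambda>\<omega>. (W \<omega>, X 1 \<omega>)) = distr M MW W \<Otimes>\<^sub>M distr M MX (X 1)"
    unfolding W_law X1_law by (rule W_X1_indep)
  interpret online_learning M MX MY MYh MW n K \<psi> W X Y Yh
    by (intro online_learning.intro online_learning_axioms.intro M W_rv X_rv Y_rv \<psi>_meas Yh_def
        K_kernel X_law W_X1_indep')
  show ?thesis using cond_indep_W_current_given_past[OF i] unfolding past_def .
qed

end
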